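(* Let $\alpha$ be a unit-speed curve in $\mathbb{R}^3$ with nonvanishing curvature, let $\alpha_T$ be its tangent indicatrix with arc length $s_T$ and Frenet apparatus $\{T_T,N_T,B_T,\kappa_T,\tau_T\}$, and let $\beta$ be an evolute-direction curve of $\alpha_T$ (an $X$-direction curve of $\alpha_T$ with $N_\beta=T_T$). Then there is an antiderivative $\varphi=\int\tau_T\,ds_T$ of $\tau_T$ with respect to $s_T$ such that $$\frac{\tau_\beta}{\kappa_\beta}=-\cot\varphi.$$ Moreover, $$\frac{\tau_T}{\kappa_T}=\frac{\kappa_\beta^2}{(\kappa_\beta^2+\tau_\beta^2)^{3/2}}\,\frac{d}{ds_T}\Big(\frac{\tau_\beta}{\kappa_\beta}\Big).$$
   Context: Let $\alpha:I\subset\mathbb{R}\to\mathbb{R}^3$ be a unit-speed curve with curvature $\kappa>0$, torsion $\tau$ and Frenet frame $\{T,N,B\}$. The tangent indicatrix of $\alpha$ is the curve $\alpha_T=T$ on the unit sphere. Its arc length is $s_T=\int\kappa\,ds$. Its Frenet apparatus is $\{T_T,N_T,B_T,\kappa_T,\tau_T\}$, with $\frac{dT_T}{ds_T}=\kappa_TN_T$, $\frac{dN_T}{ds_T}=-\kappa_TT_T+\tau_TB_T$ and $\frac{dB_T}{ds_T}=-\tau_TN_T$. Let $x,y,z$ be real functions of $s_T$ with $x^2+y^2+z^2=1$, and set $X=xT_T+yN_T+zB_T$. An integral curve $\beta$ of $X$, meaning $d\beta/ds_T=X$, is an $X$-direction curve of $\alpha_T$. It has unit speed with arc length $s_T$.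 It is regarded as a Frenet curve with frame $\{T_\beta=X,N_\beta,B_\beta\}$, curvature $\kappa_\beta>0$ and torsion $\tau_\beta$, with derivatives taken with respect to $s_T$. $\beta$ is an evolute-direction curve of $\alpha_T$ if $N_\beta=T_T$. *)

theory Defs
  imports "HOL-Analysis.Analysis"
begin

definition frenet_apparatus ::
  "real set \<Rightarrow> (real \<Rightarrow> real^3) \<Rightarrow> (real \<Rightarrow> real^3) \<Rightarrow> (real \<Rightarrow> real^3) \<Rightarrow>
   (real \<Rightarrow> real^3) \<Rightarrow> (real \<Rightarrow> real) \<Rightarrow> (real \<Rightarrow> real) \<Rightarrow> bool" where
  "frenet_apparatus J c T N B k t \<longleftrightarrow>
     (\<forall>s\<in>J. (c has_vector_derivative T s) (at s)
        \<and> norm (T s) = 1 \<and> norm (N s) = 1 \<and> T s \<bullet> N s = 0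
        \<and> B s = cross3 (T s) (N s)
        \<and> k s > 0
        \<and> (T has_vector_derivative (k s *\<^sub>R N s)) (at s)
        \<and> (N has_vector_derivative (- (k s *\<^sub>R T s) + t s *\<^sub>R B s)) (at s)
        \<and> (B has_vector_derivative (- (t s *\<^sub>R N s))) (at s))"

end

theory Submission
  imports Defs
begin

text \<open>Since \<open>N\<^sub>\<beta> = T\<^sub>T\<close> is orthogonal to \<open>X\<close>, we have \<open>X = y N\<^sub>T + z B\<^sub>T\<close> with \<open>y\<^sup>2 + z\<^sup>2 = 1\<close>.
  Differentiating \<open>X \<bullet> T\<^sub>T = 0\<close> and \<open>B\<^sub>\<beta> \<bullet> T\<^sub>T = 0\<close> gives \<open>\<kappa>\<^sub>\<beta> = -\<kappa>\<^sub>T y\<close> and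
  \<open>\<tau>\<^sub>\<beta> = \<kappa>\<^sub>T z\<close>, so \<open>y < 0\<close>, \<open>\<kappa>\<^sub>\<beta>\<^sup>2 + \<tau>\<^sub>\<beta>\<^sup>2 = \<kappa>\<^sub>T\<^sup>2\<close> and \<open>\<tau>\<^sub>\<beta>/\<kappa>\<^sub>\<beta> = -z/y\<close>. The Frenet
  equations of \<open>\<alpha>\<^sub>T\<close> give \<open>y' = \<tau>\<^sub>T z\<close> and \<open>z' = -\<tau>\<^sub>T y\<close>: the point \<open>(z, y)\<close> turns on
  the unit circle with angular speed \<open>\<tau>\<^sub>T\<close>. Hence \<open>\<phi> = -arccos z\<close> is an antiderivative of
  \<open>\<tau>\<^sub>T\<close> with \<open>cot \<phi> = z/y\<close>, and \<open>(-z/y)' = \<tau>\<^sub>T/y\<^sup>2\<close>, which is the second identity.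
  Nothing about the curve \<open>\<alpha>\<close> is needed except that \<open>s\<^sub>T\<close> maps \<open>I\<close> onto an open set.\<close>

lemma open_image_if_deriv_pos:
  fixes f f' :: "real \<Rightarrow> real"
  assumes "is_interval I" "open I"
    and deriv: "\<And>s. s \<in> I \<Longrightarrow> (f has_real_derivative f' s) (at s)"
    and pos: "\<And>s. s \<in> I \<Longrightarrow> f' s > 0"
  shows "open (f ` I)"
proof (rule invariance_of_domain)
  have "isCont f s" if "s \<in> I" for s
    using deriv[OF that] by (rule DERIV_isCont)
  then show "continuous_on I f"
    by (simp add: continuous_at_imp_continuous_on)
  have "strict_mono_on I f"
  proof (rule strict_mono_onI)
    fix a b assume ab: "a \<in> I" "b \<in> I" "a < b"
    show "f a < f b"
    proof (rule DERIV_pos_imp_increasing[OF \<open>a < b\<close>])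
      fix v assume "a \<le> v" "v \<le> b"
      then have "v \<in> I"
        using \<open>is_interval I\<close> ab unfolding is_interval_1 by blast
      then show "\<exists>D. (f has_real_derivative D) (at v) \<and> D > 0"
        using deriv pos by blast
    qed
  qed
  then show "inj_on f I"
    by (rule strict_mono_on_imp_inj_on)
qed (fact \<open>open I\<close>)

lemma DERIV_zero_if_const_on_open:
  fixes f :: "real \<Rightarrow> real"
  assumes "open J" "u \<in> J" "\<And>v. v \<in> J \<Longrightarrow> f v = f u"
    and "(f has_real_derivative D) (at u)"
  shows "D = 0"
proof -
  obtain d where "d > 0" "ball u d \<subseteq> J"
    using assms(1,2) open_contains_ball by blast
  have "\<forall>v. \<bar>u - v\<bar> < d \<longrightarrow> f u = f v"
  proof (intro allI impI)
    fix v assume "\<bar>u - v\<bar> < d"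
    then have "v \<in> J"
      using \<open>ball u d \<subseteq> J\<close> by (auto simp: dist_real_def)
    then show "f u = f v"
      using assms(3) by simp
  qed
  then show ?thesis
    using DERIV_local_const[OF assms(4) \<open>d > 0\<close>] by simp
qed

lemma powr_three_halves_square:
  fixes a :: real
  assumes "a > 0"
  shows "(a\<^sup>2) powr (3/2) = a ^ 3"
proof -
  have "(a\<^sup>2) powr (3/2) = (a powr 2) powr (3/2)"
    using assms by (simp add: powr_realpow)
  also have "\<dots> = a powr 3"
    by (simp add: powr_powr)
  also have "\<dots> = a ^ 3"
    using assms powr_realpow[of a 3] by simp
  finally show ?thesis .
qed

lemma has_real_derivative_inner:
  fixes f g :: "real \<Rightarrow> 'a::real_inner"
  assumes "(f has_vector_derivative f') (at u)" "(g has_vector_derivative g') (at u)"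
  shows "((\<lambda>v. f v \<bullet> g v) has_real_derivative (f' \<bullet> g u + f u \<bullet> g')) (at u)"
proof -
  have "((\<lambda>v. f v \<bullet> g v) has_derivative (\<lambda>h. f u \<bullet> (h *\<^sub>R g') + (h *\<^sub>R f') \<bullet> g u)) (at u)"
    using has_derivative_inner[OF assms[unfolded has_vector_derivative_def]] .
  then show ?thesis
    unfolding has_field_derivative_def
    by (rule has_derivative_eq_rhs) (auto simp: fun_eq_iff algebra_simps)
qed

lemma frenet_apparatus_orthonormal:
  assumes "frenet_apparatus J c T N B k t" "s \<in> J"
  shows "T s \<bullet> T s = 1" "N s \<bullet> N s = 1" "B s \<bullet> B s = 1"
    and "T s \<bullet> N s = 0" "T s \<bullet> B s = 0" "N s \<bullet> B s = 0"
proof -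
  have frame: "norm (T s) = 1" "norm (N s) = 1" "T s \<bullet> N s = 0" "B s = cross3 (T s) (N s)"
    using assms unfolding frenet_apparatus_def by blast+
  then show "T s \<bullet> T s = 1" "N s \<bullet> N s = 1" "T s \<bullet> N s = 0"
    by (simp_all add: power2_norm_eq_inner[symmetric])
  have "(norm (B s))\<^sup>2 = 1"
    using norm_cross_dot[of "T s" "N s"] frame by simp
  then show "B s \<bullet> B s = 1"
    by (simp add: power2_norm_eq_inner)
  show "T s \<bullet> B s = 0" "N s \<bullet> B s = 0"
    using frame dot_cross_self by metis+
qed

locale evolute_direction_curve =
  fixes J :: "real set"
    and \<gamma> T N B :: "real \<Rightarrow> real^3" and \<kappa> \<tau> :: "real \<Rightarrow> real"
    and x y z :: "real \<Rightarrow> real"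
    and \<beta> N\<beta> B\<beta> :: "real \<Rightarrow> real^3" and \<kappa>\<beta> \<tau>\<beta> :: "real \<Rightarrow> real"
  assumes open_J: "open J"
    and frenet_\<gamma>: "frenet_apparatus J \<gamma> T N B \<kappa> \<tau>"
    and frenet_\<beta>:
      "frenet_apparatus J \<beta> (\<lambda>u. x u *\<^sub>R T u + y u *\<^sub>R N u + z u *\<^sub>R B u) N\<beta> B\<beta> \<kappa>\<beta> \<tau>\<beta>"
    and evolute: "\<forall>u\<in>J. N\<beta> u = T u"
begin

definition X :: "real \<Rightarrow> real^3" where
  "X u = x u *\<^sub>R T u + y u *\<^sub>R N u + z u *\<^sub>R B u"

lemma
  assumes "u \<in> J"
  shows curvature_pos: "\<kappa> u > 0"
    and binormal_eq: "B u = cross3 (T u) (N u)"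
    and tangent_deriv: "(T has_vector_derivative (\<kappa> u *\<^sub>R N u)) (at u)"
    and normal_deriv: "(N has_vector_derivative (- (\<kappa> u *\<^sub>R T u) + \<tau> u *\<^sub>R B u)) (at u)"
    and binormal_deriv: "(B has_vector_derivative (- (\<tau> u *\<^sub>R N u))) (at u)"
  using frenet_\<gamma> assms unfolding frenet_apparatus_def by blast+

lemma
  assumes "u \<in> J"
  shows norm_X: "norm (X u) = 1"
    and X_orthogonal_N\<beta>: "X u \<bullet> N\<beta> u = 0"
    and binormal_\<beta>_eq: "B\<beta> u = cross3 (X u) (N\<beta> u)"
    and curvature_\<beta>_pos: "\<kappa>\<beta> u > 0"
    and X_deriv: "(X has_vector_derivative (\<kappa>\<beta> u *\<^sub>R N\<beta> u)) (at u)"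
    and binormal_\<beta>_deriv: "(B\<beta> has_vector_derivative (- (\<tau>\<beta> u *\<^sub>R N\<beta> u))) (at u)"
  using frenet_\<beta> assms unfolding frenet_apparatus_def X_def[abs_def] by blast+

lemma X_inner_frame:
  assumes "u \<in> J"
  shows "X u \<bullet> T u = x u" "X u \<bullet> N u = y u" "X u \<bullet> B u = z u"
  using frenet_apparatus_orthonormal[OF frenet_\<gamma> assms]
  by (simp_all add: X_def inner_add_left
      inner_commute[of "N u" "T u"] inner_commute[of "B u" "T u"] inner_commute[of "B u" "N u"])

lemma x_eq_0: "u \<in> J \<Longrightarrow> x u = 0"
  using X_orthogonal_N\<beta> X_inner_frame(1) evolute by force

lemma y_sq_plus_z_sq:
  assumes "u \<in> J"
  shows "(y u)\<^sup>2 + (z u)\<^sup>2 = 1"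
proof -
  have "X u \<bullet> X u = x u * (X u \<bullet> T u) + y u * (X u \<bullet> N u) + z u * (X u \<bullet> B u)"
    by (simp add: X_def[of u] inner_add_right)
  then show ?thesis
    using norm_X X_inner_frame x_eq_0 assms
    by (simp add: power2_norm_eq_inner[symmetric] power2_eq_square)
qed

lemma curvature_\<beta>_eq:
  assumes "u \<in> J"
  shows "\<kappa>\<beta> u = - \<kappa> u * y u"
proof -
  have "((\<lambda>v. X v \<bullet> T v) has_real_derivative (\<kappa>\<beta> u *\<^sub>R N\<beta> u) \<bullet> T u + X u \<bullet> (\<kappa> u *\<^sub>R N u)) (at u)"
    using assms X_deriv tangent_deriv by (intro has_real_derivative_inner)
  moreover have "X v \<bullet> T v = X u \<bullet> T u" if "v \<in> J" for v
    using that assms X_inner_frame(1) x_eq_0 by simp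
  ultimately have "(\<kappa>\<beta> u *\<^sub>R N\<beta> u) \<bullet> T u + X u \<bullet> (\<kappa> u *\<^sub>R N u) = 0"
    using open_J assms by (intro DERIV_zero_if_const_on_open)
  then show ?thesis
    using assms evolute X_inner_frame(2) frenet_apparatus_orthonormal(1)[OF frenet_\<gamma>] by simp
qed

lemma torsion_\<beta>_eq:
  assumes "u \<in> J"
  shows "\<tau>\<beta> u = \<kappa> u * z u"
proof -
  have B\<beta>_T: "B\<beta> v \<bullet> T v = 0" if "v \<in> J" for v
    using that binormal_\<beta>_eq evolute dot_cross_self by metis
  have "((\<lambda>v. B\<beta> v \<bullet> T v) has_real_derivative (- (\<tau>\<beta> u *\<^sub>R N\<beta> u)) \<bullet> T u + B\<beta> u \<bullet> (\<kappa> u *\<^sub>R N u)) (at u)"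
    using assms binormal_\<beta>_deriv tangent_deriv by (intro has_real_derivative_inner)
  then have "(- (\<tau>\<beta> u *\<^sub>R N\<beta> u)) \<bullet> T u + B\<beta> u \<bullet> (\<kappa> u *\<^sub>R N u) = 0"
    using open_J assms B\<beta>_T by (intro DERIV_zero_if_const_on_open) auto
  moreover have "B\<beta> u \<bullet> N u = z u"
  proof -
    have "B\<beta> u \<bullet> N u = X u \<bullet> cross3 (T u) (N u)"
      using assms binormal_\<beta>_eq evolute by (simp add: cross3_simps)
    also have "cross3 (T u) (N u) = B u"
      using assms binormal_eq by simp
    finally show ?thesis
      using assms X_inner_frame(3) by simp
  qed
  ultimately show ?thesis
    using assms evolute frenet_apparatus_orthonormal(1)[OF frenet_\<gamma>] by simp
qed

lemma y_neg:
  assumes "u \<in> J"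
  shows "y u < 0"
proof -
  have "0 < - \<kappa> u * y u"
    using assms curvature_\<beta>_pos curvature_\<beta>_eq by simp
  then show ?thesis
    using curvature_pos[OF assms] by (simp add: mult_less_0_iff)
qed

lemma curvature_torsion_\<beta>_sq:
  assumes "u \<in> J"
  shows "(\<kappa>\<beta> u)\<^sup>2 + (\<tau>\<beta> u)\<^sup>2 = (\<kappa> u)\<^sup>2"
proof -
  have "(\<kappa>\<beta> u)\<^sup>2 + (\<tau>\<beta> u)\<^sup>2 = (\<kappa> u)\<^sup>2 * ((y u)\<^sup>2 + (z u)\<^sup>2)"
    using assms curvature_\<beta>_eq torsion_\<beta>_eq by (simp add: power_mult_distrib algebra_simps)
  then show ?thesis
    using assms y_sq_plus_z_sq by simp
qed

lemma torsion_curvature_ratio_\<beta>: "u \<in> J \<Longrightarrow> \<tau>\<beta> u / \<kappa>\<beta> u = - z u / y u"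
  using curvature_pos[of u] curvature_\<beta>_eq[of u] torsion_\<beta>_eq[of u] by simp

lemma y_has_real_derivative:
  assumes "u \<in> J"
  shows "(y has_real_derivative \<tau> u * z u) (at u)"
proof -
  have "((\<lambda>v. X v \<bullet> N v) has_real_derivative
          (\<kappa>\<beta> u *\<^sub>R N\<beta> u) \<bullet> N u + X u \<bullet> (- (\<kappa> u *\<^sub>R T u) + \<tau> u *\<^sub>R B u)) (at u)"
    using assms X_deriv normal_deriv by (intro has_real_derivative_inner)
  moreover have "(\<kappa>\<beta> u *\<^sub>R N\<beta> u) \<bullet> N u + X u \<bullet> (- (\<kappa> u *\<^sub>R T u) + \<tau> u *\<^sub>R B u) = \<tau> u * z u"
    using assms evolute X_inner_frame x_eq_0 frenet_apparatus_orthonormal(4)[OF frenet_\<gamma>]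
    by (simp add: inner_add_right inner_diff_right)
  ultimately show ?thesis
    using open_J assms X_inner_frame(2)
    by (auto intro: has_field_derivative_transform_within_open)
qed

lemma z_has_real_derivative:
  assumes "u \<in> J"
  shows "(z has_real_derivative - \<tau> u * y u) (at u)"
proof -
  have "((\<lambda>v. X v \<bullet> B v) has_real_derivative
          (\<kappa>\<beta> u *\<^sub>R N\<beta> u) \<bullet> B u + X u \<bullet> (- (\<tau> u *\<^sub>R N u))) (at u)"
    using assms X_deriv binormal_deriv by (intro has_real_derivative_inner)
  moreover have "(\<kappa>\<beta> u *\<^sub>R N\<beta> u) \<bullet> B u + X u \<bullet> (- (\<tau> u *\<^sub>R N u)) = - \<tau> u * y u"
    using assms evolute X_inner_frame frenet_apparatus_orthonormal(5)[OF frenet_\<gamma>] by simp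
  ultimately show ?thesis
    using open_J assms X_inner_frame(3)
    by (auto intro: has_field_derivative_transform_within_open)
qed

lemma torsion_curvature_ratio_\<beta>_eq_neg_cot:
  "\<exists>\<phi>. \<forall>u\<in>J. (\<phi> has_real_derivative \<tau> u) (at u) \<and> \<tau>\<beta> u / \<kappa>\<beta> u = - cot (\<phi> u)"
proof (intro exI[of _ "\<lambda>v. - arccos (z v)"] ballI conjI)
  fix u assume u: "u \<in> J"
  have one_minus_z_sq: "1 - (z u)\<^sup>2 = (y u)\<^sup>2"
    using u y_sq_plus_z_sq by (simp add: algebra_simps)
  then have sqrt_eq: "sqrt (1 - (z u)\<^sup>2) = - y u"
    using y_neg[OF u] by simp
  have "(y u)\<^sup>2 > 0"
    using y_neg[OF u] by simp
  with one_minus_z_sq have "(z u)\<^sup>2 < 1"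
    by linarith
  then have "\<bar>z u\<bar> < 1"
    using abs_square_less_1 by blast
  then have "(arccos has_real_derivative inverse (y u)) (at (z u))"
    using DERIV_arccos[of "z u"] sqrt_eq by simp
  from DERIV_chain2[OF this z_has_real_derivative[OF u]]
  have "((\<lambda>v. - arccos (z v)) has_real_derivative - (inverse (y u) * (- \<tau> u * y u))) (at u)"
    by (rule DERIV_minus)
  moreover have "- (inverse (y u) * (- \<tau> u * y u)) = \<tau> u"
    using y_neg[OF u] by (simp add: field_simps)
  ultimately show "((\<lambda>v. - arccos (z v)) has_real_derivative \<tau> u) (at u)"
    by (rule DERIV_cong)
  have "cot (- arccos (z u)) = z u / y u"
    using \<open>\<bar>z u\<bar> < 1\<close> sqrt_eq by (simp add: cot_def cos_arccos_abs sin_arccos_abs)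
  then show "\<tau>\<beta> u / \<kappa>\<beta> u = - cot (- arccos (z u))"
    using u torsion_curvature_ratio_\<beta> by simp
qed

lemma torsion_curvature_ratio_\<beta>_has_real_derivative:
  assumes u: "u \<in> J"
  shows "((\<lambda>v. \<tau>\<beta> v / \<kappa>\<beta> v) has_real_derivative \<tau> u / (y u)\<^sup>2) (at u)"
proof -
  have "y u \<noteq> 0"
    using y_neg[OF u] by simp
  from DERIV_divide[OF z_has_real_derivative[OF u] y_has_real_derivative[OF u] this]
  have "((\<lambda>v. - (z v / y v)) has_real_derivative
          - (((- \<tau> u * y u) * y u - z u * (\<tau> u * z u)) / (y u * y u))) (at u)"
    by (rule DERIV_minus)
  moreover have "(- \<tau> u * y u) * y u - z u * (\<tau> u * z u) = - \<tau> u * ((y u)\<^sup>2 + (z u)\<^sup>2)"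
    by (simp add: power2_eq_square algebra_simps)
  ultimately have "((\<lambda>v. - (z v / y v)) has_real_derivative \<tau> u / (y u)\<^sup>2) (at u)"
    using y_sq_plus_z_sq[OF u] by (simp add: power2_eq_square)
  then show ?thesis
    using open_J u torsion_curvature_ratio_\<beta>
    by (auto intro: has_field_derivative_transform_within_open)
qed

lemma torsion_curvature_ratio_eq_deriv_ratio_\<beta>:
  "\<forall>u\<in>J. \<exists>D. ((\<lambda>v. \<tau>\<beta> v / \<kappa>\<beta> v) has_real_derivative D) (at u)
             \<and> \<tau> u / \<kappa> u = (\<kappa>\<beta> u)\<^sup>2 / ((\<kappa>\<beta> u)\<^sup>2 + (\<tau>\<beta> u)\<^sup>2) powr (3/2) * D"
proof (rule ballI)
  fix u assume u: "u \<in> J"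
  have "((\<kappa>\<beta> u)\<^sup>2 + (\<tau>\<beta> u)\<^sup>2) powr (3/2) = \<kappa> u ^ 3"
    unfolding curvature_torsion_\<beta>_sq[OF u] using curvature_pos[OF u] by (rule powr_three_halves_square)
  moreover have "(\<kappa>\<beta> u)\<^sup>2 = (\<kappa> u)\<^sup>2 * (y u)\<^sup>2"
    using curvature_\<beta>_eq[OF u] by (simp add: power_mult_distrib)
  ultimately have "\<tau> u / \<kappa> u
      = (\<kappa>\<beta> u)\<^sup>2 / ((\<kappa>\<beta> u)\<^sup>2 + (\<tau>\<beta> u)\<^sup>2) powr (3/2) * (\<tau> u / (y u)\<^sup>2)"
    using curvature_pos[OF u] y_neg[OF u] by (simp add: field_simps power2_eq_square power3_eq_cube)
  then show "\<exists>D. ((\<lambda>v. \<tau>\<beta> v / \<kappa>\<beta> v) has_real_derivative D) (at u)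
          \<and> \<tau> u / \<kappa> u = (\<kappa>\<beta> u)\<^sup>2 / ((\<kappa>\<beta> u)\<^sup>2 + (\<tau>\<beta> u)\<^sup>2) powr (3/2) * D"
    using torsion_curvature_ratio_\<beta>_has_real_derivative[OF u] by blast
qed

end

theorem corollary4p4:
  fixes I :: "real set"
    and \<alpha> T N B :: "real \<Rightarrow> real^3" and \<kappa> \<tau> :: "real \<Rightarrow> real"
    and sT :: "real \<Rightarrow> real"
    and \<alpha>T TT NT BT :: "real \<Rightarrow> real^3" and \<kappa>T \<tau>T :: "real \<Rightarrow> real"
    and x y z :: "real \<Rightarrow> real"
    and \<beta> N\<beta> B\<beta> :: "real \<Rightarrow> real^3" and \<kappa>\<beta> \<tau>\<beta> :: "real \<Rightarrow> real"
  assumes I: "is_interval I" "open I"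
    and alpha: "frenet_apparatus I \<alpha> T N B \<kappa> \<tau>"
    and arclen: "\<forall>s\<in>I. (sT has_real_derivative \<kappa> s) (at s)"
    and indicatrix: "\<forall>s\<in>I. \<alpha>T (sT s) = T s"
    and alphaT: "frenet_apparatus (sT ` I) \<alpha>T TT NT BT \<kappa>T \<tau>T"
    and xyz: "\<forall>u\<in>sT ` I. (x u)\<^sup>2 + (y u)\<^sup>2 + (z u)\<^sup>2 = 1"
    and beta: "frenet_apparatus (sT ` I) \<beta>
                 (\<lambda>u. x u *\<^sub>R TT u + y u *\<^sub>R NT u + z u *\<^sub>R BT u) N\<beta> B\<beta> \<kappa>\<beta> \<tau>\<beta>"
    and evolute: "\<forall>u\<in>sT ` I. N\<beta> u = TT u"
  shows "(\<exists>\<phi>. \<forall>u\<in>sT ` I. (\<phi> has_real_derivative \<tau>T u) (at u)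
                         \<and> \<tau>\<beta> u / \<kappa>\<beta> u = - cot (\<phi> u))
      \<and> (\<forall>u\<in>sT ` I. \<exists>D. ((\<lambda>v. \<tau>\<beta> v / \<kappa>\<beta> v) has_real_derivative D) (at u)
                 \<and> \<tau>T u / \<kappa>T u
                     = (\<kappa>\<beta> u)\<^sup>2 / ((\<kappa>\<beta> u)\<^sup>2 + (\<tau>\<beta> u)\<^sup>2) powr (3/2) * D)"
proof -
  have "open (sT ` I)"
    using I arclen alpha unfolding frenet_apparatus_def by (intro open_image_if_deriv_pos) blast+
  then interpret evolute_direction_curve "sT ` I" \<alpha>T TT NT BT \<kappa>T \<tau>T x y z \<beta> N\<beta> B\<beta> \<kappa>\<beta> \<tau>\<beta>
    using alphaT beta evolute by unfold_locales
  show ?thesis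
    using torsion_curvature_ratio_\<beta>_eq_neg_cot
      torsion_curvature_ratio_eq_deriv_ratio_\<beta> by (rule conjI)
qed

end
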